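(* There exists a non-commutative bilinear algorithm computing the product of two $9\times 9$ matrices using $520$ multiplications. That is, $\langle 9,9,9\rangle\leq 520$.
   Context: Fix a field $\mathbb{K}$. A non-commutative bilinear algorithm for multiplying an $a\times b$ matrix $A$ by a $b\times c$ matrix $B$ using $r$ multiplications consists of $r$ products $t_k=\big(\sum_{i,j}\alpha^{(k)}_{ij}a_{ij}\big)\big(\sum_{j,l}\beta^{(k)}_{jl}b_{jl}\big)$ with scalars in $\mathbb{K}$, together with scalars $\gamma^{(k)}_{il}\in\mathbb{K}$ such that $(AB)_{il}=\sum_k\gamma^{(k)}_{il}t_k$ for all $i,l$. This identity must hold when the entries lie in an arbitrary, not necessarily commutative, associative $\mathbb{K}$-algebra. The quantity $\langle a,b,c\rangle$ denotes the minimal such $r$. *)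

theory Defs
  imports Main
begin

text \<open>Non-commutative formal series over a field 'k in the noncommuting
variables a_ij (encoded as (False,i,j)) and b_jl (encoded as (True,j,l)).  This ring contains the free
associative 'k-algebra on these variables, so an identity holds here iff it
holds in the free algebra, i.e. iff it holds for entries in every
associative 'k-algebra.\<close>

type_synonym var = "bool \<times> nat \<times> nat"
type_synonym 'k ncser = "var list \<Rightarrow> 'k"

definition ncvar :: "var \<Rightarrow> 'k::field ncser" where
  "ncvar x = (\<lambda>w. if w = [x] then 1 else 0)"

definition ncmul :: "'k::field ncser \<Rightarrow> 'k ncser \<Rightarrow> 'k ncser" where
  "ncmul p q = (\<lambda>w. \<Sum>i\<le>length w. p (take i w) * q (drop i w))"

definition avar :: "nat \<Rightarrow> nat \<Rightarrow> 'k::field ncser" where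
  "avar i j = ncvar (False, i, j)"
definition bvar :: "nat \<Rightarrow> nat \<Rightarrow> 'k::field ncser" where
  "bvar j l = ncvar (True, j, l)"

definition bilinear_algorithm ::
  "nat \<Rightarrow> nat \<Rightarrow> nat \<Rightarrow> nat \<Rightarrow>
   (nat \<Rightarrow> nat \<Rightarrow> nat \<Rightarrow> 'k::field) \<Rightarrow> (nat \<Rightarrow> nat \<Rightarrow> nat \<Rightarrow> 'k) \<Rightarrow>
   (nat \<Rightarrow> nat \<Rightarrow> nat \<Rightarrow> 'k) \<Rightarrow> bool" where
  "bilinear_algorithm a b c r \<alpha> \<beta> \<gamma> \<longleftrightarrow>
     (\<forall>i<a. \<forall>l<c.
        (\<lambda>w. \<Sum>k<r. \<gamma> k i l *
            ncmul (\<lambda>u. \<Sum>i'<a. \<Sum>j<b. \<alpha> k i' j * avar i' j u)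
                  (\<lambda>u. \<Sum>j<b. \<Sum>l'<c. \<beta> k j l' * bvar j l' u) w)
        = (\<lambda>w. \<Sum>j<b. ncmul (avar i j) (bvar j l) w))"

definition matmul_rank_le :: "'k::field itself \<Rightarrow> nat \<Rightarrow> nat \<Rightarrow> nat \<Rightarrow> nat \<Rightarrow> bool" where
  "matmul_rank_le _ a b c r \<longleftrightarrow>
     (\<exists>r'\<le>r. \<exists>(\<alpha>::nat \<Rightarrow> nat \<Rightarrow> nat \<Rightarrow> 'k) \<beta> \<gamma>. bilinear_algorithm a b c r' \<alpha> \<beta> \<gamma>)"

end

theory Submission
  imports Defs
begin

(*
  Split 9 x 9 matrices into 3 x 3 blocks of 3 x 3 matrices and run a 23-term algorithm for
  <3,3,3> on the blocks, computing each block product u(A) v(B) again with that algorithm: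
  this costs 23 * 23 = 529 products.  After flipping signs in two of its terms, the 23 terms
  fall into 20 classes with a common B-factor v: 17 singletons and 3 pairs.  For a pair
  (u1, v, w1), (u2, v, w2) the two block products are the two halves of the single <6,3,3>
  product [u1(A); u2(A)] v(B), done by a 43-term algorithm instead of 2 * 23 = 46 products.
  This gives 17 * 23 + 3 * 43 = 520.

  All algorithms are given by integer solutions of the Brent equations, checked by
  evaluation.  Such a solution yields a bilinear algorithm over every field that is valid
  non-commutatively, because each product is a linear form in the entries of A times a linear
  form in the entries of B.
*)

lemma nat_eq_iff_div_mod_eq: "(x::nat) = y \<longleftrightarrow> x div n = y div n \<and> x mod n = y mod n"
  by (metis div_mult_mod_eq)

lemma mult_add_less_mult:
  fixes s g i n :: nat
  assumes "s < g" "i < n"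
  shows "s * n + i < g * n"
proof -
  have "s * n + i < (s + 1) * n" using assms(2) by simp
  also have "\<dots> \<le> g * n" using assms(1) by (intro mult_right_mono) auto
  finally show ?thesis .
qed

lemma mult_add_eq_mult_add_iff:
  fixes s s' i i' n :: nat
  assumes "i < n" "i' < n"
  shows "s * n + i = s' * n + i' \<longleftrightarrow> s = s' \<and> i = i'"
  using assms nat_eq_iff_div_mod_eq[of "s * n + i" "s' * n + i'" n] by auto

lemma sum_sum_delta:
  fixes a b :: nat
  shows "(\<Sum>i<a. \<Sum>j<b. if x = i \<and> y = j then f i j else 0) =
    (if x < a \<and> y < b then f x y else (0::'a::comm_monoid_add))"
proof -
  have "(\<Sum>i<a. \<Sum>j<b. if x = i \<and> y = j then f i j else 0) =
      (\<Sum>i<a. if x = i then (\<Sum>j<b. if y = j then f x j else 0) else 0)"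
    by (intro sum.cong) auto
  then show ?thesis by simp
qed

lemma sum_mult_sum_swap:
  fixes X Z :: "'a \<Rightarrow> 'b \<Rightarrow> 'c::comm_semiring_0"
  shows "(\<Sum>k\<in>K. (\<Sum>s\<in>S. X s k) * Y k * (\<Sum>s'\<in>S'. Z s' k)) =
    (\<Sum>s\<in>S. \<Sum>s'\<in>S'. \<Sum>k\<in>K. X s k * Y k * Z s' k)"
proof -
  have "(\<Sum>k\<in>K. (\<Sum>s\<in>S. X s k) * Y k * (\<Sum>s'\<in>S'. Z s' k)) =
      (\<Sum>k\<in>K. \<Sum>s\<in>S. \<Sum>s'\<in>S'. X s k * Y k * Z s' k)"
    by (simp add: sum_distrib_left sum_distrib_right) (intro sum.cong refl sum.swap)
  also have "\<dots> = (\<Sum>s\<in>S. \<Sum>k\<in>K. \<Sum>s'\<in>S'. X s k * Y k * Z s' k)"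
    by (rule sum.swap)
  also have "\<dots> = (\<Sum>s\<in>S. \<Sum>s'\<in>S'. \<Sum>k\<in>K. X s k * Y k * Z s' k)"
    by (intro sum.cong refl sum.swap)
  finally show ?thesis .
qed

definition ncser_linear :: "'k::field ncser \<Rightarrow> bool" where
  "ncser_linear p \<longleftrightarrow> (\<forall>u. length u \<noteq> 1 \<longrightarrow> p u = 0)"

lemma ncmul_linear_pair:
  assumes "ncser_linear p" "ncser_linear q"
  shows "ncmul p q [x, y] = p [x] * q [y]"
  using assms by (simp add: ncmul_def ncser_linear_def)

lemma ncmul_linear_nonpair:
  assumes "ncser_linear p" "ncser_linear q" and "length w \<noteq> 2"
  shows "ncmul p q w = 0"
  unfolding ncmul_def
proof (rule sum.neutral, intro ballI)
  fix i assume "i \<in> {..length w}"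
  then show "p (take i w) * q (drop i w) = 0"
    using assms by (cases "i = 1") (simp_all add: ncser_linear_def)
qed

definition a_form :: "nat \<Rightarrow> nat \<Rightarrow> (nat \<Rightarrow> nat \<Rightarrow> 'k) \<Rightarrow> 'k::field ncser" where
  "a_form a b \<alpha> = (\<lambda>u. \<Sum>i<a. \<Sum>j<b. \<alpha> i j * avar i j u)"

definition b_form :: "nat \<Rightarrow> nat \<Rightarrow> (nat \<Rightarrow> nat \<Rightarrow> 'k) \<Rightarrow> 'k::field ncser" where
  "b_form b c \<beta> = (\<lambda>u. \<Sum>j<b. \<Sum>l<c. \<beta> j l * bvar j l u)"

lemma ncser_linear_ncvar: "ncser_linear (ncvar x)"
  by (simp add: ncser_linear_def ncvar_def)

lemma ncser_linear_a_form: "ncser_linear (a_form a b \<alpha>)"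
  by (auto simp: ncser_linear_def a_form_def avar_def ncvar_def intro!: sum.neutral)

lemma ncser_linear_b_form: "ncser_linear (b_form b c \<beta>)"
  by (auto simp: ncser_linear_def b_form_def bvar_def ncvar_def intro!: sum.neutral)

lemma ncser_linear_avar: "ncser_linear (avar i j)"
  by (simp add: avar_def ncser_linear_ncvar)

lemma ncser_linear_bvar: "ncser_linear (bvar j l)"
  by (simp add: bvar_def ncser_linear_ncvar)

lemma a_form_letter:
  "a_form a b \<alpha> [(t, i, j)] = (if \<not> t \<and> i < a \<and> j < b then \<alpha> i j else 0)"
proof -
  have "\<alpha> i' j' * avar i' j' [(t, i, j)] = (if i = i' \<and> j = j' then (if t then 0 else \<alpha> i' j') else 0)"
    for i' j'
    by (auto simp: avar_def ncvar_def)
  then show ?thesis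
    by (simp add: a_form_def sum_sum_delta)
qed

lemma b_form_letter:
  "b_form b c \<beta> [(t, j, l)] = (if t \<and> j < b \<and> l < c then \<beta> j l else 0)"
proof -
  have "\<beta> j' l' * bvar j' l' [(t, j, l)] = (if j = j' \<and> l = l' then (if t then \<beta> j' l' else 0) else 0)"
    for j' l'
    by (auto simp: bvar_def ncvar_def)
  then show ?thesis
    by (simp add: b_form_def sum_sum_delta)
qed

lemma matmul_entry_pair:
  "(\<Sum>j<b. ncmul (avar i j) (bvar j l) [(t, i', j'), (t', j'', l')] :: 'k::field) =
   (if \<not> t \<and> t' \<and> i' = i \<and> j' = j'' \<and> l' = l \<and> j' < b then 1 else 0)"
proof -
  have "ncmul (avar i j) (bvar j l) [(t, i', j'), (t', j'', l')] =
      (if j = j' then (if \<not> t \<and> t' \<and> i' = i \<and> j'' = j' \<and> l' = l then 1 else 0) else (0::'k))" for j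
    by (simp add: ncmul_linear_pair ncser_linear_avar ncser_linear_bvar,
        auto simp: avar_def bvar_def ncvar_def)
  then show ?thesis by simp
qed

type_synonym coeff_matrix = "nat \<Rightarrow> nat \<Rightarrow> int"
type_synonym triad = "coeff_matrix \<times> coeff_matrix \<times> coeff_matrix"

definition brent_sum :: "triad list \<Rightarrow> nat \<Rightarrow> nat \<Rightarrow> nat \<Rightarrow> nat \<Rightarrow> nat \<Rightarrow> nat \<Rightarrow> int" where
  "brent_sum S i' j j' l' i l = (\<Sum>(\<alpha>, \<beta>, \<gamma>)\<leftarrow>S. \<alpha> i' j * \<beta> j' l' * \<gamma> i l)"

definition matmul_decomp :: "nat \<Rightarrow> nat \<Rightarrow> nat \<Rightarrow> triad list \<Rightarrow> bool" where
  "matmul_decomp a b c S \<longleftrightarrow> (\<forall>i'<a. \<forall>j<b. \<forall>j'<b. \<forall>l'<c. \<forall>i<a. \<forall>l<c.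
     brent_sum S i' j j' l' i l = (if i' = i \<and> j = j' \<and> l' = l then 1 else 0))"

lemma brent_sum_nth:
  "brent_sum S i' j j' l' i l =
     (\<Sum>k<length S. fst (S!k) i' j * fst (snd (S!k)) j' l' * snd (snd (S!k)) i l)"
  by (simp add: brent_sum_def sum_list_sum_nth atLeast0LessThan split_beta)

lemma bilinear_algorithm_of_matmul_decomp:
  assumes decomp: "matmul_decomp a b c S"
  shows "bilinear_algorithm a b c (length S)
    (\<lambda>k i j. of_int (fst (S!k) i j)) (\<lambda>k j l. of_int (fst (snd (S!k)) j l))
    (\<lambda>k i l. of_int (snd (snd (S!k)) i l) :: 'k::field)"
proof -
  have "(\<Sum>k<length S. of_int (snd (snd (S!k)) i l) *
          ncmul (a_form a b (\<lambda>i j. of_int (fst (S!k) i j)))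
            (b_form b c (\<lambda>j l. of_int (fst (snd (S!k)) j l))) w) =
        (\<Sum>j<b. ncmul (avar i j) (bvar j l) w :: 'k)"
    (is "?lhs = ?rhs") if "i < a" "l < c" for i l w
  proof (cases "length w = 2")
    case False
    then show ?thesis
      by (simp add: ncmul_linear_nonpair ncser_linear_a_form ncser_linear_b_form
          ncser_linear_avar ncser_linear_bvar)
  next
    case True
    then obtain t i' j' t' j'' l' where w: "w = [(t, i', j'), (t', j'', l')]"
      by (auto simp: length_Suc_conv numeral_2_eq_2)
    have lhs: "?lhs = (\<Sum>k<length S. of_int (snd (snd (S!k)) i l) *
        ((if \<not> t \<and> i' < a \<and> j' < b then of_int (fst (S!k) i' j') else 0) *
         (if t' \<and> j'' < b \<and> l' < c then of_int (fst (snd (S!k)) j'' l') else 0)))"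
      by (simp add: w ncmul_linear_pair ncser_linear_a_form ncser_linear_b_form
          a_form_letter b_form_letter)
    show ?thesis
    proof (cases "\<not> t \<and> t' \<and> i' < a \<and> j' < b \<and> j'' < b \<and> l' < c")
      case True
      then have "?lhs = of_int (brent_sum S i' j' j'' l' i l)"
        by (simp add: lhs brent_sum_nth mult_ac)
      also have "\<dots> = ?rhs"
        using decomp True that by (simp add: matmul_decomp_def w matmul_entry_pair)
      finally show ?thesis .
    next
      case False
      then have "?lhs = 0"
        by (auto simp: lhs)
      moreover have "?rhs = 0"
        using False that by (auto simp: w matmul_entry_pair)
      ultimately show ?thesis
        by simp
    qed
  qed
  then show ?thesis
    by (simp add: bilinear_algorithm_def a_form_def b_form_def fun_eq_iff)
qed

lemma matmul_rank_le_of_matmul_decomp: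
  assumes "matmul_decomp a b c S" and "length S \<le> r"
  shows "matmul_rank_le TYPE('k::field) a b c r"
  using bilinear_algorithm_of_matmul_decomp[OF assms(1)] assms(2)
  unfolding matmul_rank_le_def by blast

type_synonym sharing_group = "coeff_matrix \<times> (coeff_matrix \<times> coeff_matrix) list \<times> triad list"

definition group_outer_triads :: "sharing_group \<Rightarrow> triad list" where
  "group_outer_triads = (\<lambda>(v, UW, G). map (\<lambda>(u, w). (u, v, w)) UW)"

(* A composite row index I stands for the pair (I div n, I mod n): row I mod n of block row
   I div n, and likewise for columns.  Row s * n + i of the inner <g n, m, p> problem is row i
   of the s-th stacked block u_s(A). *)
definition group_composite_triads :: "nat \<Rightarrow> nat \<Rightarrow> nat \<Rightarrow> sharing_group \<Rightarrow> triad list" where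
  "group_composite_triads n m p = (\<lambda>(v, UW, G). map (\<lambda>(\<alpha>, \<beta>, \<gamma>).
     (\<lambda>I J. \<Sum>s<length UW. fst (UW!s) (I div n) (J div m) * \<alpha> (s*n + I mod n) (J mod m),
      \<lambda>J L. v (J div m) (L div p) * \<beta> (J mod m) (L mod p),
      \<lambda>I L. \<Sum>s<length UW. snd (UW!s) (I div n) (L div p) * \<gamma> (s*n + I mod n) (L mod p))) G)"

lemma length_group_composite_triads:
  "length (group_composite_triads n m p g) = length (snd (snd g))"
  by (simp add: group_composite_triads_def split_beta)

lemma brent_sum_group_composite_expand:
  "brent_sum (group_composite_triads n m p (v, UW, G)) I' J J' L' I L =
    (\<Sum>s<length UW. \<Sum>s'<length UW.
       fst (UW!s) (I' div n) (J div m) * v (J' div m) (L' div p) * snd (UW!s') (I div n) (L div p) *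
       brent_sum G (s*n + I' mod n) (J mod m) (J' mod m) (L' mod p) (s'*n + I mod n) (L mod p))"
proof -
  have "brent_sum (group_composite_triads n m p (v, UW, G)) I' J J' L' I L =
    (\<Sum>k<length G.
       (\<Sum>s<length UW. fst (UW!s) (I' div n) (J div m) * fst (G!k) (s*n + I' mod n) (J mod m)) *
       (v (J' div m) (L' div p) * fst (snd (G!k)) (J' mod m) (L' mod p)) *
       (\<Sum>s'<length UW.
          snd (UW!s') (I div n) (L div p) * snd (snd (G!k)) (s'*n + I mod n) (L mod p)))"
    by (simp add: brent_sum_nth group_composite_triads_def split_beta)
  also have "\<dots> = (\<Sum>s<length UW. \<Sum>s'<length UW. \<Sum>k<length G.
       (fst (UW!s) (I' div n) (J div m) * fst (G!k) (s*n + I' mod n) (J mod m)) *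
       (v (J' div m) (L' div p) * fst (snd (G!k)) (J' mod m) (L' mod p)) *
       (snd (UW!s') (I div n) (L div p) * snd (snd (G!k)) (s'*n + I mod n) (L mod p)))"
    by (rule sum_mult_sum_swap)
  also have "\<dots> = (\<Sum>s<length UW. \<Sum>s'<length UW.
       fst (UW!s) (I' div n) (J div m) * v (J' div m) (L' div p) * snd (UW!s') (I div n) (L div p) *
       brent_sum G (s*n + I' mod n) (J mod m) (J' mod m) (L' mod p) (s'*n + I mod n) (L mod p))"
    by (simp add: brent_sum_nth sum_distrib_left mult_ac)
  finally show ?thesis .
qed

lemma brent_sum_group_composite:
  assumes inner: "matmul_decomp (length UW * n) m p G" and "0 < n" "0 < m" "0 < p"
  shows "brent_sum (group_composite_triads n m p (v, UW, G)) I' J J' L' I L =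
    brent_sum (group_outer_triads (v, UW, G))
      (I' div n) (J div m) (J' div m) (L' div p) (I div n) (L div p) *
    (if I' mod n = I mod n \<and> J mod m = J' mod m \<and> L' mod p = L mod p then 1 else 0)"
proof -
  let ?\<delta> = "(if I' mod n = I mod n \<and> J mod m = J' mod m \<and> L' mod p = L mod p then 1 else 0) :: int"
  define c where
    "c s s' = fst (UW!s) (I' div n) (J div m) * v (J' div m) (L' div p) * snd (UW!s') (I div n) (L div p)"
    for s s'
  have "brent_sum G (s*n + I' mod n) (J mod m) (J' mod m) (L' mod p) (s'*n + I mod n) (L mod p) =
      (if s' = s then ?\<delta> else 0)" if "s < length UW" "s' < length UW" for s s'
    using inner that \<open>0 < n\<close> \<open>0 < m\<close> \<open>0 < p\<close>
    by (auto simp: matmul_decomp_def mult_add_less_mult mult_add_eq_mult_add_iff)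
  then have "brent_sum (group_composite_triads n m p (v, UW, G)) I' J J' L' I L =
      (\<Sum>s<length UW. \<Sum>s'<length UW. c s s' * (if s' = s then ?\<delta> else 0))"
    by (simp add: brent_sum_group_composite_expand c_def)
  also have "\<dots> = (\<Sum>s<length UW. c s s) * ?\<delta>"
  proof -
    have "c s s' * (if s' = s then ?\<delta> else 0) = (if s' = s then c s s * ?\<delta> else 0)" for s s'
      by simp
    then show ?thesis
      by (simp add: sum_distrib_right)
  qed
  also have "(\<Sum>s<length UW. c s s) =
      brent_sum (group_outer_triads (v, UW, G))
        (I' div n) (J div m) (J' div m) (L' div p) (I div n) (L div p)"
    by (simp add: brent_sum_nth group_outer_triads_def c_def split_beta)
  finally show ?thesis .
qed

lemma brent_sum_concat:
  "brent_sum (concat Ss) i' j j' l' i l = (\<Sum>S\<leftarrow>Ss. brent_sum S i' j j' l' i l)"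
  by (induction Ss) (simp_all add: brent_sum_def)

lemma matmul_decomp_composite:
  assumes outer: "matmul_decomp a b c (concat (map group_outer_triads gs))"
    and inner: "\<forall>(v, UW, G)\<in>set gs. matmul_decomp (length UW * n) m p G"
    and pos: "0 < n" "0 < m" "0 < p"
  shows "matmul_decomp (a*n) (b*m) (c*p) (concat (map (group_composite_triads n m p) gs))"
  unfolding matmul_decomp_def
proof (intro allI impI)
  fix I' J J' L' I L
  assume bounds: "I' < a*n" "J < b*m" "J' < b*m" "L' < c*p" "I < a*n" "L < c*p"
  let ?\<delta> = "(if I' mod n = I mod n \<and> J mod m = J' mod m \<and> L' mod p = L mod p then 1 else 0) :: int"
  have "brent_sum (group_composite_triads n m p g) I' J J' L' I L =
      brent_sum (group_outer_triads g)
        (I' div n) (J div m) (J' div m) (L' div p) (I div n) (L div p) * ?\<delta>"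
    if "g \<in> set gs" for g
    using inner pos that by (cases g) (auto simp: brent_sum_group_composite)
  then have "brent_sum (concat (map (group_composite_triads n m p) gs)) I' J J' L' I L =
      (\<Sum>g\<leftarrow>gs. brent_sum (group_outer_triads g)
         (I' div n) (J div m) (J' div m) (L' div p) (I div n) (L div p) * ?\<delta>)"
    by (simp add: brent_sum_concat o_def cong: map_cong)
  also have "\<dots> = brent_sum (concat (map group_outer_triads gs))
      (I' div n) (J div m) (J' div m) (L' div p) (I div n) (L div p) * ?\<delta>"
    by (simp add: brent_sum_concat o_def sum_list_mult_const)
  also have "\<dots> =
      (if I' div n = I div n \<and> J div m = J' div m \<and> L' div p = L div p then 1 else 0) * ?\<delta>"
    using outer bounds by (simp add: matmul_decomp_def less_mult_imp_div_less)
  also have "\<dots> = (if I' = I \<and> J = J' \<and> L' = L then 1 else 0)"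
    using nat_eq_iff_div_mod_eq[of I' I n] nat_eq_iff_div_mod_eq[of J J' m]
      nat_eq_iff_div_mod_eq[of L' L p]
    by auto
  finally show "brent_sum (concat (map (group_composite_triads n m p) gs)) I' J J' L' I L =
      (if I' = I \<and> J = J' \<and> L' = L then 1 else 0)" .
qed

type_synonym triad_lists = "int list \<times> int list \<times> int list"

definition matrix_of_list :: "nat \<Rightarrow> int list \<Rightarrow> coeff_matrix" where
  "matrix_of_list c xs = (\<lambda>i j. xs ! (i * c + j))"

definition triad_of_lists :: "nat \<Rightarrow> nat \<Rightarrow> triad_lists \<Rightarrow> triad" where
  "triad_of_lists b c = (\<lambda>(xs, ys, zs). (matrix_of_list b xs, matrix_of_list c ys, matrix_of_list c zs))"

definition triad_lists_dims :: "nat \<Rightarrow> nat \<Rightarrow> nat \<Rightarrow> triad_lists \<Rightarrow> bool" where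
  "triad_lists_dims dA dB dC = (\<lambda>(xs, ys, zs). length xs = dA \<and> length ys = dB \<and> length zs = dC)"

definition tensor_dims :: "nat \<Rightarrow> nat \<Rightarrow> nat \<Rightarrow> int list list list \<Rightarrow> bool" where
  "tensor_dims dA dB dC T \<longleftrightarrow>
     length T = dA \<and> (\<forall>x<dA. length (T!x) = dB \<and> (\<forall>y<dB. length (T!x!y) = dC))"

definition add_triad_tensor :: "triad_lists \<Rightarrow> int list list list \<Rightarrow> int list list list" where
  "add_triad_tensor = (\<lambda>(xs, ys, zs) T.
     map2 (\<lambda>x Tx. if x = 0 then Tx else
       map2 (\<lambda>y Txy. if y = 0 then Txy else map2 (\<lambda>z t. t + x * y * z) zs Txy) ys Tx) xs T)"

definition triads_tensor :: "nat \<Rightarrow> nat \<Rightarrow> nat \<Rightarrow> triad_lists list \<Rightarrow> int list list list" where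
  "triads_tensor dA dB dC S = foldr add_triad_tensor S (replicate dA (replicate dB (replicate dC 0)))"

definition matmul_tensor :: "nat \<Rightarrow> nat \<Rightarrow> nat \<Rightarrow> int list list list" where
  "matmul_tensor a b c = map (\<lambda>x. map (\<lambda>y. map (\<lambda>z.
      if x div b = z div c \<and> x mod b = y div c \<and> y mod c = z mod c then 1 else 0)
      [0..<a*c]) [0..<b*c]) [0..<a*b]"

definition check_matmul_decomp :: "nat \<Rightarrow> nat \<Rightarrow> nat \<Rightarrow> triad_lists list \<Rightarrow> bool" where
  "check_matmul_decomp a b c S \<longleftrightarrow>
     list_all (triad_lists_dims (a*b) (b*c) (a*c)) S \<and>
     triads_tensor (a*b) (b*c) (a*c) S = matmul_tensor a b c"

lemma tensor_dims_add_triad_tensor: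
  assumes "tensor_dims dA dB dC T" "triad_lists_dims dA dB dC t"
  shows "tensor_dims dA dB dC (add_triad_tensor t T)"
  using assms by (cases t) (auto simp: tensor_dims_def triad_lists_dims_def add_triad_tensor_def)

lemma add_triad_tensor_nth:
  assumes "tensor_dims dA dB dC T" "triad_lists_dims dA dB dC t" "x < dA" "y < dB" "z < dC"
  shows "add_triad_tensor t T ! x ! y ! z = T ! x ! y ! z + fst t ! x * fst (snd t) ! y * snd (snd t) ! z"
  using assms by (cases t) (auto simp: tensor_dims_def triad_lists_dims_def add_triad_tensor_def)

lemma triads_tensor_Cons:
  "triads_tensor dA dB dC (t # S) = add_triad_tensor t (triads_tensor dA dB dC S)"
  by (simp add: triads_tensor_def)

lemma tensor_dims_triads_tensor:
  assumes "list_all (triad_lists_dims dA dB dC) S"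
  shows "tensor_dims dA dB dC (triads_tensor dA dB dC S)"
  using assms
proof (induction S)
  case Nil
  then show ?case by (simp add: triads_tensor_def tensor_dims_def)
next
  case (Cons t S)
  then show ?case by (simp add: triads_tensor_Cons tensor_dims_add_triad_tensor)
qed

lemma triads_tensor_nth:
  assumes "list_all (triad_lists_dims dA dB dC) S" "x < dA" "y < dB" "z < dC"
  shows "triads_tensor dA dB dC S ! x ! y ! z = (\<Sum>(xs, ys, zs)\<leftarrow>S. xs ! x * ys ! y * zs ! z)"
  using assms
proof (induction S)
  case Nil
  then show ?case by (simp add: triads_tensor_def)
next
  case (Cons t S)
  then have "tensor_dims dA dB dC (triads_tensor dA dB dC S)" "triad_lists_dims dA dB dC t"
    by (simp_all add: tensor_dims_triads_tensor)
  with Cons show ?case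
    by (simp add: triads_tensor_Cons add_triad_tensor_nth split_beta)
qed

lemma check_matmul_decomp_sound:
  assumes "check_matmul_decomp a b c S"
  shows "matmul_decomp a b c (map (triad_of_lists b c) S)"
  unfolding matmul_decomp_def
proof (intro allI impI)
  fix i' j j' l' i l
  assume bounds: "i' < a" "j < b" "j' < b" "l' < c" "i < a" "l < c"
  have dims: "list_all (triad_lists_dims (a*b) (b*c) (a*c)) S"
    and tensor: "triads_tensor (a*b) (b*c) (a*c) S = matmul_tensor a b c"
    using assms by (simp_all add: check_matmul_decomp_def)
  have idx: "i' * b + j < a * b" "j' * c + l' < b * c" "i * c + l < a * c"
    using bounds by (simp_all add: mult_add_less_mult)
  have "brent_sum (map (triad_of_lists b c) S) i' j j' l' i l =
      triads_tensor (a*b) (b*c) (a*c) S ! (i' * b + j) ! (j' * c + l') ! (i * c + l)"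
    using triads_tensor_nth[OF dims idx]
    by (simp add: brent_sum_def triad_of_lists_def matrix_of_list_def o_def case_prod_unfold)
  also have "\<dots> = (if i' = i \<and> j = j' \<and> l' = l then 1 else 0)"
    using idx bounds by (simp add: tensor matmul_tensor_def)
  finally show "brent_sum (map (triad_of_lists b c) S) i' j j' l' i l =
      (if i' = i \<and> j = j' \<and> l' = l then 1 else 0)" .
qed

definition decomp_333 :: "triad_lists list" where "decomp_333 = [
([0, 0, 0, -1, 0, 0, 0, 0, 0], [-1, 1, 0, -1, 1, 0, 0, 0, 0], [0, -1, 1, 0, -1, 1, 0, 0, 0]),
([0, 0, 0, 0, 0, 0, -1, 1, 0], [-1, 0, 0, 0, 0, 0, 0, 0, 0], [0, 0, 0, 1, 1, 0, 1, 0, 0]),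
([-1, 0, 0, 1, 0, 0, -1, 0, 0], [-1, 0, 1, -1, 0, 1, 0, 0, 0], [0, 0, 0, 0, 0, 0, 0, 1, -1]),
([1, -1, -1, 0, 0, 0, 0, 0, 0], [1, -1, -1, 1, -1, -1, 0, 1, 1], [0, -1, 0, 0, 0, 0, 0, 1, 0]),
([0, 0, 0, 1, -1, -1, 0, 0, 0], [0, 0, 0, -1, 1, 1, 0, 0, -1], [0, 0, 0, 0, -1, 0, 0, 0, 0]),
([0, 1, 0, 0, -1, 0, 0, 0, 0], [0, 0, 0, 0, 0, -1, 0, 0, 1], [0, 0, 0, 1, 0, 1, 0, 0, 0]),
([1, 0, 0, 0, 0, 0, 0, 1, 0], [1, 0, 0, 1, -1, -1, 0, 1, 1], [1, 1, 0, 1, 1, 0, 0, -1, 0]),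
([0, 1, 0, 0, 0, 0, 0, 1, 0], [0, 0, 0, 0, 1, 1, 0, -1, -1], [1, 1, 0, 1, 1, 0, 0, 0, 0]),
([0, 1, 1, 0, 0, 0, 0, 0, 0], [-1, 1, 1, -1, 1, 1, 0, 0, 0], [0, 0, 1, 0, 0, 1, 0, -1, 0]),
([0, -1, -1, 1, 0, 0, 0, 0, 0], [-1, 1, 1, -1, 1, 1, 0, 0, -1], [0, -1, 1, 0, 0, 1, 0, 0, 0]),
([-1, 1, 0, 1, -1, 0, -1, 1, 0], [0, 0, 0, 1, 0, -1, 0, 0, 1], [0, 0, 0, -1, -1, 0, 0, 0, 0]),
([1, -1, -1, -1, 1, 1, 1, -1, -1], [0, 0, 0, 0, 0, 0, 0, 0, 1], [0, 0, 0, 0, 0, 1, 0, 0, 0]),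
([0, 1, 1, 0, 0, 0, 0, 1, 1], [0, -1, -1, 0, 0, 0, 0, -1, -1], [0, 0, 0, 0, 0, 0, 0, -1, 0]),
([-1, 0, 0, 1, 0, 0, 0, 0, 0], [0, 0, -1, 0, 0, 0, 0, 0, 0], [0, -1, 1, 0, 0, 0, 0, 1, -1]),
([0, 0, 0, 0, 0, 0, 0, 0, -1], [0, 0, 0, 0, 0, 0, 1, 0, 0], [0, 0, 0, 0, 0, 0, -1, 0, 0]),
([0, 0, 0, 0, 0, 1, 0, 0, 0], [0, 0, 0, -1, 1, 1, 1, -1, -1], [1, 0, 0, 1, 0, 0, 0, 0, 0]),
([-1, 0, 0, 1, 0, 0, -1, 1, 0], [1, 0, 0, 1, 0, -1, 0, 0, 1], [0, 0, 0, 1, 1, 0, 0, 1, -1]),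
([0, 0, -1, 0, 0, 1, 0, 0, 0], [0, 0, 0, 0, 0, 0, 1, 0, 0], [-1, 0, 0, 0, 0, 0, 0, 0, 0]),
([0, 1, 0, -1, 0, 0, 0, 0, 0], [0, 0, 0, 0, 0, 1, 0, 0, -1], [0, -1, 1, 0, -1, 1, 0, 0, 0]),
([1, -1, -1, 0, 0, 0, 1, -1, -1], [0, -1, -1, 0, 0, 0, 0, 0, 0], [0, 0, 0, 0, 0, 0, 0, -1, 0]),
([1, 0, 0, -1, 0, 0, 1, -1, -1], [0, 0, 0, 0, 0, 0, 0, 0, -1], [0, 0, 0, 0, 0, 1, 0, -1, 1]),
([-1, 1, 0, 0, 0, 1, 0, 0, 0], [0, 0, 0, -1, 1, 1, 0, -1, -1], [-1, 0, 0, -1, -1, 0, 0, 0, 0]),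
([0, 0, 0, 0, 0, 0, 0, 1, 0], [1, 0, 0, 1, 0, 0, 0, 0, 0], [-1, -1, 0, -1, -1, 0, 1, 0, 1])]"

definition decomp_633 :: "triad_lists list" where "decomp_633 = [
([-1, -1, 0, 0, 0, 1, 0, 0, -1, -1, -1, -1, 1, 1, -1, 0, 0, -1], [1, 0, -1, 0, -1, 0, 0, 1, 0], [0, 1, -1, 0, 0, 0, 0, 0, 0, 0, -1, 2, 0, 0, 0, 0, 0, -1]),
([0, 0, 0, 1, 0, 0, 0, 0, 0, 0, 0, 0, 0, 0, 0, -1, 0, 0], [1, -1, 0, 0, 0, 0, 0, 0, 0], [0, -2, 2, 0, 0, 0, 0, -1, 1, 0, 1, -1, 0, -1, 1, 0, 1, -1]),
([-1, -1, -1, 0, 1, 1, -1, -1, -1, -1, -1, -1, 1, 0, 0, -1, -1, -1], [-1, 0, 0, 1, 0, 0, 0, -1, -1], [-2, 0, 0, -1, 0, -1, 1, 0, 2, 1, 0, 0, -2, 0, -1, -1, 0, -2]),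
([-1, -1, 0, 0, 0, 0, -1, -2, -1, -1, -1, 0, 1, 1, 0, -1, -2, -1], [1, 0, 0, 0, -1, 0, -1, 1, 0], [1, 1, 0, 1, 0, 1, 0, 1, -1, -1, -1, 0, 1, 0, 1, 1, 0, 1]),
([1, 1, 1, 0, 0, -1, 1, 1, 1, 1, 1, 1, -1, -1, 0, 1, 1, 1], [1, 0, 0, -1, 0, 0, 1, 0, 0], [2, 0, 0, 0, 0, 0, 1, 0, 0, -2, 0, -1, 1, 0, 0, 0, 0, 1]),
([-1, -1, 0, 0, 0, 0, -1, -1, 0, -1, -1, 0, 1, 1, 0, -1, -1, 0], [-1, 0, 0, 0, 0, 0, 1, 0, 0], [0, 1, 0, 0, 0, 1, 1, 1, -1, 0, -1, 0, 0, 0, 1, 0, 0, 1]),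
([-1, -1, -1, -1, -1, -1, -1, -1, -1, -1, -1, -1, 1, 1, 1, -1, -1, -1], [0, 0, 0, 0, 0, 0, 0, 0, 1], [-1, 0, -1, -1, 0, -1, 1, 0, 1, 0, 0, 0, -1, 0, -1, -1, 0, -1]),
([0, 1, 2, -1, 0, -1, 0, 0, 0, 0, 1, 2, 0, -1, -1, 0, 0, 1], [0, 0, 0, 0, 0, 0, -1, 0, 1], [-1, -1, 0, -1, -1, 0, 1, 1, 0, 0, 0, 0, -1, -1, 0, -1, -1, 0]),
([0, 0, 0, 0, -1, -1, 0, 0, 0, 0, 0, 0, 0, 0, 0, 0, 1, 1], [0, 0, 0, 0, 0, 0, -1, 1, 0], [0, 0, 0, 0, 0, 0, 1, 0, 1, 0, 0, 0, 0, 0, 0, -1, 0, -1]),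
([-1, -1, -1, 2, 2, 2, 0, 0, 0, -1, -1, -1, 0, 0, 0, -1, -1, -1], [0, 0, 0, 0, -1, 0, 0, 0, 0], [0, 0, 0, 0, 0, 0, -1, -1, -1, 0, 0, 0, 0, 0, 0, 1, 1, 1]),
([-2, -1, 0, 1, 0, 1, 1, 0, -1, -1, -1, -1, 2, 1, -1, 0, 0, -1], [1, 0, -1, 0, 0, 0, 0, 0, 0], [0, -1, 1, 0, 0, 0, 0, 0, 0, 0, 1, -1, 0, 0, 0, 0, 0, 0]),
([1, 1, 1, 0, 0, 0, 1, 1, 1, 1, 1, 1, -1, -1, -1, 1, 1, 1], [0, 0, 0, 0, 0, 0, -1, 1, 1], [2, 0, 0, 1, -1, 1, -1, 2, -2, -1, -1, 0, 2, -1, 1, 1, -1, 2]),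
([0, 1, 0, -1, 0, -1, 0, 0, 1, 0, 1, 1, 0, -1, 1, 0, 0, 1], [1, 0, -1, -1, 0, 1, 1, 0, -1], [0, 0, 0, 0, 0, 0, 0, 0, 0, 0, 0, 1, 0, 0, 0, 0, 0, -1]),
([-1, -1, -1, 2, 0, 0, 0, 0, 0, -1, -1, -1, 0, 1, 1, -1, 0, 0], [0, 1, 0, 0, -1, 0, 0, 0, 0], [0, -1, 1, 0, 0, 0, 0, 0, 0, 0, 0, 0, 0, -1, 1, 0, 0, 0]),
([-2, -2, 1, 0, 0, -2, 0, 0, 0, -2, -2, 1, 2, 2, 0, 0, 0, 1], [0, 0, 0, 0, 1, 0, 0, -1, 0], [-1, 0, -1, -1, -1, 0, 0, 0, 0, -1, -2, 1, -1, -1, 0, 1, 1, 0]),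
([1, 2, 1, 0, -1, -1, 1, 2, 1, 1, 2, 1, -1, -1, 0, 1, 2, 1], [1, 0, 0, -1, 0, 0, 0, 0, 0], [0, 0, 0, 1, 0, 1, -1, 0, -1, 0, 0, 0, 1, 0, 1, 1, 0, 1]),
([-1, -1, 0, 0, 1, 1, -1, -2, -1, -1, -2, -1, 1, 0, -1, -1, -2, -1], [1, 0, 0, -1, 1, 1, 0, -1, -1], [-1, 0, 0, 0, 0, 1, 0, 0, -1, 1, 0, 0, 0, 0, 1, 0, 0, 1]),
([1, 0, 0, 1, 0, 0, 1, 0, 0, 1, 0, 0, -1, 0, 0, 1, 0, 0], [0, 0, -1, -1, 1, 1, 1, -1, 0], [0, 0, -1, 0, 0, -1, 0, 0, 1, 0, 0, 1, 0, 0, -1, 0, 0, -2]),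
([0, 0, 0, 0, 0, 1, -1, -1, -1, -1, -1, -1, 0, 0, -1, -1, -1, -1], [-1, 0, 0, 0, 1, 1, 0, -1, -1], [-1, 0, 1, 0, 0, 0, 0, 0, 1, 1, 0, 0, 0, 0, 1, 0, 0, -1]),
([-1, -1, 0, 0, 0, 1, -1, -1, -1, -1, -1, -1, 1, 1, -1, -1, -1, -1], [0, 0, 0, -1, 1, 1, 1, -1, -1], [1, 0, -1, 0, 0, -1, 0, 0, 0, -1, 0, 1, 0, 0, -1, 0, 0, -1]),
([-1, -1, -1, 0, 0, 0, 0, 0, 0, -1, -1, -1, 1, 1, 1, 0, 0, 0], [0, 1, 0, 0, -1, 0, 0, 1, 0], [0, 2, -2, 0, 0, 0, 0, 1, -1, 0, -2, 1, 0, 1, -1, 0, 0, 1]),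
([0, -1, 0, -1, 0, -1, 0, 1, 1, 0, 0, 1, 0, 1, 1, 0, 0, 1], [0, 0, 0, 1, 0, -1, 0, 0, 0], [0, 0, 0, 0, 0, 0, 0, 0, -1, 0, 0, 0, 0, 0, 0, 0, 0, 1]),
([0, 0, 1, -1, -1, -2, 0, 0, 0, 0, 0, 1, 0, 0, 0, 0, 0, 1], [0, 0, 0, 0, 1, 0, 1, -1, -1], [-1, -1, 0, -1, -1, 0, 1, 1, 1, 0, 0, 0, -1, -1, 0, -1, -1, -1]),
([0, 0, 0, 0, -1, 0, 0, 0, 0, 0, 0, 0, 0, 0, 0, 0, 1, 0], [0, 0, 0, 1, -1, 0, -1, 1, 0], [0, 0, 0, 0, 0, 0, 1, 0, 1, -2, 0, -2, 0, 0, 0, 1, 0, 1]),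
([0, 0, 0, 0, 1, 1, 0, -1, -1, 0, -1, -1, 0, -1, -1, 0, -1, -1], [0, -1, -1, 0, 0, 0, 0, 1, 1], [0, 0, 1, 0, 0, 1, 0, 0, -1, 0, 0, -1, 0, 0, 1, 0, 0, 1]),
([1, 1, 1, 1, 1, 1, 1, 1, 1, 1, 1, 1, -1, -1, -1, 1, 1, 1], [0, 0, 0, 0, 0, 0, 1, -1, -1], [0, -1, 0, 0, -1, 0, 0, 1, 0, 0, 0, 0, 0, -1, 0, 0, -1, 0]),
([-1, -1, -1, 0, -2, 1, -1, -2, -1, -1, -1, -1, 1, 1, 0, -1, 0, -1], [0, 0, 0, -1, 1, 0, 1, -1, 0], [1, 0, 1, 1, 0, 1, 0, 0, 0, -1, 0, -1, 1, 0, 1, 1, 0, 1]),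
([0, 0, 0, 1, 1, 1, -1, -1, -1, -1, -1, -1, -1, -1, -1, -1, -1, -1], [1, -1, -1, 0, 0, 0, 0, 0, 0], [0, -1, 2, 0, 0, 0, 0, 0, 1, 0, 1, -1, 0, 0, 1, 0, 0, -1]),
([1, 1, 1, -2, -1, -1, 0, 0, 0, 1, 1, 1, 0, 0, 0, 1, 0, 0], [-1, 0, 0, 0, 1, 0, 0, 0, 0], [0, 2, -2, 0, 0, 0, 1, 1, 0, 0, -1, 1, 0, 1, -1, -1, -1, 0]),
([0, -1, -1, 0, 0, 0, 0, 0, 0, 0, -1, -1, 0, 1, 1, 0, 0, 0], [0, -1, 0, 0, 1, 0, 0, 0, 0], [0, 1, -1, 0, 1, -1, 0, -1, 1, 0, -1, 1, 0, 1, -1, 0, 1, -1]),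
([0, 0, 0, 0, 1, 1, -1, -1, -1, -1, -1, -1, 0, -1, -1, -1, -1, -1], [0, 1, 1, 0, -1, -1, 0, 1, 1], [0, 0, 2, 0, 0, 0, 0, 0, 1, 0, 0, -1, 0, 0, 1, 0, 0, -1]),
([0, 0, 0, 1, 1, 0, 0, 0, 0, 0, 0, 0, -1, -1, 0, 0, 0, 0], [-1, 0, 0, 0, 0, 0, 0, 0, 0], [1, 2, -1, 0, 0, 0, 1, 1, 0, 0, -1, 1, 1, 1, 0, -1, -1, 0]),
([1, 0, 0, -2, -1, -1, 0, 1, 1, 1, 1, 1, 0, 1, 1, 1, 1, 1], [-1, 1, 1, 0, -1, 0, 0, 0, 0], [0, 1, -1, 0, 0, 0, 0, 0, -1, 0, -1, 1, 0, 0, 0, 0, 0, 1]),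
([1, 0, 0, 1, 0, 0, 1, 0, 0, 1, 0, 0, -1, 0, 0, 1, 0, 0], [1, -1, 0, 0, 0, 0, -1, 1, 0], [0, -1, 0, 0, 0, -1, 0, -1, 2, 0, 1, 0, 0, 0, -1, 0, 0, -2]),
([0, 0, 0, 1, 1, 1, 0, 0, -1, 0, 0, -1, 0, 0, -1, 0, 0, -1], [0, 0, 0, 1, -1, -1, -1, 1, 1], [0, 0, -1, 0, 0, -1, 0, 0, 0, 0, 0, 0, 0, 0, -1, 0, 0, 0]),
([0, -1, -1, 1, 0, 0, 0, 0, 0, 0, -1, -1, 0, 1, 1, 0, 0, 0], [0, 1, 0, 0, -1, 0, 1, 0, -1], [0, 0, 0, 0, 1, -1, 0, -2, 2, 0, 1, 0, 0, 1, -1, 0, 1, -2]),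
([0, 0, 0, 0, -1, -1, 1, 2, 1, 1, 2, 1, 0, 1, 1, 1, 2, 1], [0, 0, 0, 0, 1, 1, 0, -1, -1], [-1, 0, -1, 0, 0, 0, 0, 0, 0, 1, 0, 1, 0, 0, 0, 0, 0, 0]),
([1, 1, -1, 0, 0, 2, 0, 0, 0, 1, 1, -1, -1, -1, 0, 0, 0, -1], [0, 0, 0, 0, 1, 0, 0, -1, 0], [-2, -1, -1, -2, -2, 0, 0, 0, 0, -1, -2, 1, -2, -2, 0, 1, 1, 0]),
([0, 0, 0, 0, 1, 1, 0, 0, 0, 0, 0, 0, 0, -1, -1, 0, 0, 0], [0, 0, 0, 0, 0, 0, 0, 1, 1], [-2, 0, -2, -1, 0, -1, 1, 0, 1, 1, 0, 1, -2, 0, -2, -1, 0, -1]),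
([1, 0, 0, 0, -1, -1, 1, 1, 1, 1, 1, 1, -1, 1, 1, 1, 1, 1], [1, -1, -1, -1, 1, 1, 0, 0, 0], [0, 0, 0, 0, 0, 1, 0, 0, -2, 0, 0, 0, 0, 0, 1, 0, 0, 2]),
([1, 0, 1, 0, 1, -1, 1, 1, 1, 1, 0, 1, -1, 0, 0, 1, -1, 1], [0, 0, 0, 1, -1, 0, -1, 1, 0], [-1, 0, -1, -1, 0, -1, 1, 0, 1, 0, 0, 0, -1, 0, -1, -1, 0, -1]),
([1, 0, 0, 1, 0, 0, 1, 1, 1, 1, 0, 0, -1, 0, 0, 1, 1, 1], [1, 0, 0, 0, -1, 0, 0, 1, -1], [1, 1, 0, 1, 0, 1, -1, 1, -2, 0, -1, 1, 1, 0, 1, 1, 0, 1]),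
([1, 1, 1, 0, 0, -1, 0, 0, 0, 1, 1, 1, -1, -1, 0, 0, 0, 0], [1, 0, 0, 0, -1, 0, 0, 1, 0], [0, 2, -2, 0, 0, 0, 0, 1, -1, 1, -1, 2, 0, 1, -1, -1, -1, 0])]"

(* The terms (u, v, w) of decomp_333 grouped by their B-factor v; in the first two groups one
   term appears with u and v negated. *)
definition scheme_333 :: "(int list \<times> (int list \<times> int list) list) list" where "scheme_333 = [
([0, 0, 0, 0, 0, 1, 0, 0, -1], [([0, -1, 0, 0, 1, 0, 0, 0, 0], [0, 0, 0, 1, 0, 1, 0, 0, 0]), ([0, 1, 0, -1, 0, 0, 0, 0, 0], [0, -1, 1, 0, -1, 1, 0, 0, 0])]),
([0, 0, 0, 0, 0, 0, 0, 0, 1], [([1, -1, -1, -1, 1, 1, 1, -1, -1], [0, 0, 0, 0, 0, 1, 0, 0, 0]), ([-1, 0, 0, 1, 0, 0, -1, 1, 1], [0, 0, 0, 0, 0, 1, 0, -1, 1])]),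
([0, 0, 0, 0, 0, 0, 1, 0, 0], [([0, 0, 0, 0, 0, 0, 0, 0, -1], [0, 0, 0, 0, 0, 0, -1, 0, 0]), ([0, 0, -1, 0, 0, 1, 0, 0, 0], [-1, 0, 0, 0, 0, 0, 0, 0, 0])]),
([-1, 1, 0, -1, 1, 0, 0, 0, 0], [([0, 0, 0, -1, 0, 0, 0, 0, 0], [0, -1, 1, 0, -1, 1, 0, 0, 0])]),
([-1, 0, 0, 0, 0, 0, 0, 0, 0], [([0, 0, 0, 0, 0, 0, -1, 1, 0], [0, 0, 0, 1, 1, 0, 1, 0, 0])]),
([-1, 0, 1, -1, 0, 1, 0, 0, 0], [([-1, 0, 0, 1, 0, 0, -1, 0, 0], [0, 0, 0, 0, 0, 0, 0, 1, -1])]),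
([1, -1, -1, 1, -1, -1, 0, 1, 1], [([1, -1, -1, 0, 0, 0, 0, 0, 0], [0, -1, 0, 0, 0, 0, 0, 1, 0])]),
([0, 0, 0, -1, 1, 1, 0, 0, -1], [([0, 0, 0, 1, -1, -1, 0, 0, 0], [0, 0, 0, 0, -1, 0, 0, 0, 0])]),
([1, 0, 0, 1, -1, -1, 0, 1, 1], [([1, 0, 0, 0, 0, 0, 0, 1, 0], [1, 1, 0, 1, 1, 0, 0, -1, 0])]),
([0, 0, 0, 0, 1, 1, 0, -1, -1], [([0, 1, 0, 0, 0, 0, 0, 1, 0], [1, 1, 0, 1, 1, 0, 0, 0, 0])]),
([-1, 1, 1, -1, 1, 1, 0, 0, 0], [([0, 1, 1, 0, 0, 0, 0, 0, 0], [0, 0, 1, 0, 0, 1, 0, -1, 0])]),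
([-1, 1, 1, -1, 1, 1, 0, 0, -1], [([0, -1, -1, 1, 0, 0, 0, 0, 0], [0, -1, 1, 0, 0, 1, 0, 0, 0])]),
([0, 0, 0, 1, 0, -1, 0, 0, 1], [([-1, 1, 0, 1, -1, 0, -1, 1, 0], [0, 0, 0, -1, -1, 0, 0, 0, 0])]),
([0, -1, -1, 0, 0, 0, 0, -1, -1], [([0, 1, 1, 0, 0, 0, 0, 1, 1], [0, 0, 0, 0, 0, 0, 0, -1, 0])]),
([0, 0, -1, 0, 0, 0, 0, 0, 0], [([-1, 0, 0, 1, 0, 0, 0, 0, 0], [0, -1, 1, 0, 0, 0, 0, 1, -1])]),
([0, 0, 0, -1, 1, 1, 1, -1, -1], [([0, 0, 0, 0, 0, 1, 0, 0, 0], [1, 0, 0, 1, 0, 0, 0, 0, 0])]),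
([1, 0, 0, 1, 0, -1, 0, 0, 1], [([-1, 0, 0, 1, 0, 0, -1, 1, 0], [0, 0, 0, 1, 1, 0, 0, 1, -1])]),
([0, -1, -1, 0, 0, 0, 0, 0, 0], [([1, -1, -1, 0, 0, 0, 1, -1, -1], [0, 0, 0, 0, 0, 0, 0, -1, 0])]),
([0, 0, 0, -1, 1, 1, 0, -1, -1], [([-1, 1, 0, 0, 0, 1, 0, 0, 0], [-1, 0, 0, -1, -1, 0, 0, 0, 0])]),
([1, 0, 0, 1, 0, 0, 0, 0, 0], [([0, 0, 0, 0, 0, 0, 0, 1, 0], [-1, -1, 0, -1, -1, 0, 1, 0, 1])])]"

definition group_of_lists :: "int list \<times> (int list \<times> int list) list \<Rightarrow> sharing_group" where
  "group_of_lists = (\<lambda>(v, UW).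
     (matrix_of_list 3 v, map (\<lambda>(u, w). (matrix_of_list 3 u, matrix_of_list 3 w)) UW,
      map (triad_of_lists 3 3) (if length UW = 1 then decomp_333 else decomp_633)))"

definition group_outer_lists :: "int list \<times> (int list \<times> int list) list \<Rightarrow> triad_lists list" where
  "group_outer_lists = (\<lambda>(v, UW). map (\<lambda>(u, w). (u, v, w)) UW)"

lemma group_outer_triads_of_lists:
  "group_outer_triads (group_of_lists g) = map (triad_of_lists 3 3) (group_outer_lists g)"
  by (simp add: group_outer_triads_def group_of_lists_def group_outer_lists_def
      triad_of_lists_def split_beta)

lemma check_decomp_333: "check_matmul_decomp 3 3 3 decomp_333"
  by code_simp

lemma check_decomp_633: "check_matmul_decomp 6 3 3 decomp_633"
  by code_simp

lemma check_scheme_333: "check_matmul_decomp 3 3 3 (concat (map group_outer_lists scheme_333))"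
  by code_simp

lemma scheme_333_group_sizes: "\<forall>(v, UW)\<in>set scheme_333. length UW = 1 \<or> length UW = 2"
  by (simp add: scheme_333_def)

theorem mainTheorem4:
  shows "matmul_rank_le TYPE('k::field) 9 9 9 520"
proof -
  let ?gs = "map group_of_lists scheme_333"
  have outer: "matmul_decomp 3 3 3 (concat (map group_outer_triads ?gs))"
    using check_matmul_decomp_sound[OF check_scheme_333]
    by (simp add: group_outer_triads_of_lists map_concat o_def)
  have inner: "\<forall>(v, UW, G)\<in>set ?gs. matmul_decomp (length UW * 3) 3 3 G"
    using scheme_333_group_sizes check_matmul_decomp_sound[OF check_decomp_333]
      check_matmul_decomp_sound[OF check_decomp_633]
    by (auto simp: group_of_lists_def)
  have decomp: "matmul_decomp 9 9 9 (concat (map (group_composite_triads 3 3 3) ?gs))"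
    using matmul_decomp_composite[OF outer inner] by simp
  have count: "length (concat (map (group_composite_triads 3 3 3) ?gs)) = 520"
    by (simp add: length_concat length_group_composite_triads group_of_lists_def scheme_333_def
        decomp_333_def decomp_633_def)
  show ?thesis
    using count by (intro matmul_rank_le_of_matmul_decomp[OF decomp]) simp
qed

end
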